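(* Let $X\in\mathbb{R}^{n\times p}$ with columns $\mathbf x_1,\dots,\mathbf x_p$, let $\mathbf y\in\mathbb{R}^n$, $\mathbf y\neq\mathbf 0$, let $\|X^T\mathbf y\|_\infty\ge\lambda_1>\lambda_2>0$, and fix $j$ with $\mathbf x_j\ne\mathbf 0$. Define $$\Omega=\Big\{\boldsymbol\theta\in\mathbb{R}^n:\ \big\langle\boldsymbol\theta_1^*-\tfrac{\mathbf y}{\lambda_1},\boldsymbol\theta-\boldsymbol\theta_1^*\big\rangle\ge0,\ \big\langle\boldsymbol\theta-\tfrac{\mathbf y}{\lambda_2},\boldsymbol\theta_1^*-\boldsymbol\theta\big\rangle\ge0\Big\},$$ $u_j^+(\lambda_2)=\max_{\boldsymbol\theta\in\Omega}\langle\mathbf x_j,\boldsymbol\theta\rangle$ and $u_j^-(\lambda_2)=\max_{\boldsymbol\theta\in\Omega}\langle-\mathbf x_j,\boldsymbol\theta\rangle$. Let $\mathbf a=\frac{\mathbf y}{\lambda_1}-\boldsymbol\theta_1^*$, $\mathbf b=\frac{\mathbf y}{\lambda_2}-\boldsymbol\theta_1^*$, and when $\mathbf a\ne\mathbf 0$ let $\mathbf x_j^\perp=\mathbf x_j-\mathbf a\frac{\langle\mathbf x_j,\mathbf a\rangle}{\|\mathbf a\|_2^2}$ and $\mathbf y^\perp=\mathbf y-\mathbf a\frac{\langle\mathbf y,\mathbf a\rangle}{\|\mathbf a\|_2^2}$. Consider the formulas (P1) $u_j^+(\lambda_2)=\langle\mathbf x_j,\boldsymbol\theta_1^*\rangle+\frac{\frac1{\lambda_2}-\frac1{\lambda_1}}{2}\big[\|\mathbf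 x_j^\perp\|_2\|\mathbf y^\perp\|_2+\langle\mathbf x_j^\perp,\mathbf y^\perp\rangle\big]$; (N1) $u_j^-(\lambda_2)=-\langle\mathbf x_j,\boldsymbol\theta_1^*\rangle+\frac{\frac1{\lambda_2}-\frac1{\lambda_1}}{2}\big[\|\mathbf x_j^\perp\|_2\|\mathbf y^\perp\|_2-\langle\mathbf x_j^\perp,\mathbf y^\perp\rangle\big]$; (N2) $u_j^-(\lambda_2)=-\langle\mathbf x_j,\boldsymbol\theta_1^*\rangle+\frac12\big[\|\mathbf x_j\|_2\|\mathbf b\|_2-\langle\mathbf x_j,\mathbf b\rangle\big]$; (P2) $u_j^+(\lambda_2)=\langle\mathbf x_j,\boldsymbol\theta_1^*\rangle+\frac12\big[\|\mathbf x_j\|_2\|\mathbf b\|_2+\langle\mathbf x_j,\mathbf b\rangle\big]$. Then: 1) If $\mathbf a\ne\mathbf 0$ and $\frac{\langle\mathbf b,\mathbf a\rangle}{\|\mathbf b\|_2\|\mathbf a\|_2}>\frac{|\langle\mathbf x_j,\mathbf a\rangle|}{\|\mathbf x_j\|_2\|\mathbf a\|_2}$, then (P1) and (N1) hold. 2) If $\langle\mathbf x_j,\mathbf a\rangle>0$ and $\frac{\langle\mathbf b,\mathbf a\rangle}{\|\mathbf b\|_2\|\mathbf a\|_2}\le\frac{\langle\mathbf x_j,\mathbf a\rangle}{\|\mathbf x_j\|_2\|\mathbf a\|_2}$, then (P1) and (N2) hold. 3) If $\langle\mathbf x_j,\mathbf a\rangle<0$ and $\frac{\langle\mathbf b,\mathbf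 a\rangle}{\|\mathbf b\|_2\|\mathbf a\|_2}\le\frac{-\langle\mathbf x_j,\mathbf a\rangle}{\|\mathbf x_j\|_2\|\mathbf a\|_2}$, then (P2) and (N1) hold. 4) If $\mathbf a=\mathbf 0$, then (N2) and (P2) hold.
   Context: $X\in\mathbb{R}^{n\times p}$ is a matrix with columns $\mathbf x_j$ and $\mathbf y\in\mathbb{R}^n$ a vector. Let $F=\{\boldsymbol\theta\in\mathbb{R}^n:\|X^T\boldsymbol\theta\|_\infty\le 1\}$. For $\lambda>0$, the Lasso dual optimum $\boldsymbol\theta^*(\lambda)$ is the unique minimizer of $\frac12\|\boldsymbol\theta-\mathbf y/\lambda\|_2^2$ over $\boldsymbol\theta\in F$, i.e. the Euclidean projection of $\mathbf y/\lambda$ onto $F$. Write $\boldsymbol\theta_1^*=\boldsymbol\theta^*(\lambda_1)$. *)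

theory Defs
  imports "HOL-Analysis.Analysis"
begin

text \<open>X has n rows and p columns: X :: real^'p^'n; column j is  column j X.\<close>

definition dual_feasible :: "real^'p^'n \<Rightarrow> (real^'n) set" where
  "dual_feasible X = {\<theta>. infnorm (transpose X *v \<theta>) \<le> 1}"

text \<open>Lasso dual optimum: Euclidean projection of y/lambda onto F.\<close>
definition dual_opt :: "real^'p^'n \<Rightarrow> real^'n \<Rightarrow> real \<Rightarrow> real^'n" where
  "dual_opt X y lam = closest_point (dual_feasible X) ((1/lam) *\<^sub>R y)"

definition Omega :: "real^'p^'n \<Rightarrow> real^'n \<Rightarrow> real \<Rightarrow> real \<Rightarrow> (real^'n) set" where
  "Omega X y l1 l2 = {\<theta>.
     (dual_opt X y l1 - (1/l1) *\<^sub>R y) \<bullet> (\<theta> - dual_opt X y l1) \<ge> 0 \<and>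
     (\<theta> - (1/l2) *\<^sub>R y) \<bullet> (dual_opt X y l1 - \<theta>) \<ge> 0}"

definition u_plus :: "real^'p^'n \<Rightarrow> real^'n \<Rightarrow> real \<Rightarrow> real \<Rightarrow> 'p \<Rightarrow> real" where
  "u_plus X y l1 l2 j = Sup ((\<lambda>\<theta>. column j X \<bullet> \<theta>) ` Omega X y l1 l2)"

definition u_minus :: "real^'p^'n \<Rightarrow> real^'n \<Rightarrow> real \<Rightarrow> real \<Rightarrow> 'p \<Rightarrow> real" where
  "u_minus X y l1 l2 j = Sup ((\<lambda>\<theta>. (- column j X) \<bullet> \<theta>) ` Omega X y l1 l2)"

end

theory Submission
  imports Defs
begin

(* Translating by the dual optimum th1 = dual_opt X y l1 turns the region Omega
   into the "lens"  {v. |v|^2 <= v.b, a.v <= 0}: the closed ball with diameter [0, b]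
   (centre b/2, radius |b|/2) cut by the half-space a.v <= 0.  A linear functional x.v
   attains its maximum (|x||b| + x.b)/2 over that ball at p = b/2 + |b|/(2|x|) x.
   If p lies in the half-space, which is decided by the sign of (a.b)|x| + |b|(a.x) = 2|x|(a.p),
   this is also the maximum over the lens.  Otherwise every lens point v can be moved along the
   segment towards p to the hyperplane a.v = 0 without decreasing x.v, and on that hyperplane
   the problem is again a ball problem, for the projections of x and b orthogonal to a.
   For the Lasso one only needs that th1 is the projection of y/l1 onto the convex closed set F
   containing 0, so a.th1 >= 0; hence a <> 0 implies a.b > 0, and b = a + (1/l2 - 1/l1) y. *)

text \<open>Maximum of \<open>x \<bullet> v\<close> over the ball \<open>|v|\<^sup>2 \<le> v \<bullet> b\<close>, and the point where it is attained.\<close>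
definition ball_max :: "'a::real_inner \<Rightarrow> 'a \<Rightarrow> real" where
  "ball_max x b = (norm x * norm b + x \<bullet> b) / 2"

definition ball_argmax :: "'a::real_inner \<Rightarrow> 'a \<Rightarrow> 'a" where
  "ball_argmax x b = b /\<^sub>R 2 + (norm b / (2 * norm x)) *\<^sub>R x"

text \<open>The set \<open>|v|\<^sup>2 \<le> v \<bullet> b\<close> is the closed ball with diameter [0, b]; this gives convexity.\<close>
lemma diameter_ball_eq_cball:
  fixes v b :: "'a::real_inner"
  shows "norm v ^ 2 \<le> v \<bullet> b \<longleftrightarrow> v \<in> cball (b /\<^sub>R 2) (norm b / 2)"
proof -
  have "norm (v - b /\<^sub>R 2) ^ 2 = norm v ^ 2 - v \<bullet> b + (norm b / 2) ^ 2"
    by (simp add: power2_norm_eq_inner inner_commute algebra_simps power_divide)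
  then have "norm v ^ 2 \<le> v \<bullet> b \<longleftrightarrow> norm (v - b /\<^sub>R 2) ^ 2 \<le> (norm b / 2) ^ 2"
    by linarith
  also have "\<dots> \<longleftrightarrow> norm (v - b /\<^sub>R 2) \<le> norm b / 2"
    by simp
  finally show ?thesis by (simp add: dist_norm norm_minus_commute)
qed

text \<open>Cauchy--Schwarz around the centre \<open>b/2\<close> bounds every linear functional on the ball.\<close>
lemma ball_max_upper:
  fixes x v b :: "'a::real_inner"
  assumes "norm v ^ 2 \<le> v \<bullet> b"
  shows "x \<bullet> v \<le> ball_max x b"
proof -
  have r: "norm (v - b /\<^sub>R 2) \<le> norm b / 2"
    using assms by (simp add: diameter_ball_eq_cball dist_norm norm_minus_commute)
  have "x \<bullet> v = x \<bullet> b / 2 + x \<bullet> (v - b /\<^sub>R 2)"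
    by (simp add: inner_diff_right)
  also have "x \<bullet> (v - b /\<^sub>R 2) \<le> norm x * norm (v - b /\<^sub>R 2)"
    by (rule norm_cauchy_schwarz)
  also have "\<dots> \<le> norm x * (norm b / 2)"
    using mult_left_mono[OF r norm_ge_zero] by simp
  finally show ?thesis by (simp add: ball_max_def)
qed

text \<open>The bound is attained (for \<open>x = 0\<close> at the centre).\<close>
lemma ball_argmax:
  fixes x b :: "'a::real_inner"
  shows "norm (ball_argmax x b) ^ 2 \<le> ball_argmax x b \<bullet> b"
    and "x \<bullet> ball_argmax x b = ball_max x b"
proof -
  have "dist (b /\<^sub>R 2) (ball_argmax x b) \<le> norm b / 2"
    by (cases "x = 0") (simp_all add: ball_argmax_def dist_norm)
  then show "norm (ball_argmax x b) ^ 2 \<le> ball_argmax x b \<bullet> b"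
    by (simp add: diameter_ball_eq_cball)
  show "x \<bullet> ball_argmax x b = ball_max x b"
    by (cases "x = 0")
       (simp_all add: ball_argmax_def ball_max_def inner_add_right power2_norm_eq_inner[symmetric]
         power2_eq_square)
qed

lemma ball_argmax_side:
  fixes x a b :: "'a::real_inner"
  assumes "x \<noteq> 0"
  shows "2 * norm x * (a \<bullet> ball_argmax x b) = (a \<bullet> b) * norm x + norm b * (a \<bullet> x)"
  using assms by (simp add: ball_argmax_def inner_add_right field_simps)

text \<open>Component of \<open>w\<close> orthogonal to \<open>a\<close> (the identity when \<open>a = 0\<close>).\<close>
definition perp :: "'a::real_inner \<Rightarrow> 'a \<Rightarrow> 'a" where
  "perp a w = w - ((w \<bullet> a) / (norm a)\<^sup>2) *\<^sub>R a"

text \<open>Basic algebra of the projection; \<open>perp_shift\<close> is what turns \<open>perp a b\<close> into a multiple of \<open>perp a y\<close>.\<close>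
lemma perp_orthogonal: "perp a w \<bullet> a = 0"
  by (cases "a = 0") (simp_all add: perp_def inner_diff_left power2_norm_eq_inner)

lemma inner_perp: "z \<bullet> a = 0 \<Longrightarrow> z \<bullet> perp a w = z \<bullet> w"
  by (simp add: perp_def inner_diff_right inner_commute)

lemma perp_uminus: "perp a (- w) = - perp a w"
  by (simp add: perp_def)

lemma perp_shift:
  assumes "a \<noteq> 0"
  shows "perp a (a + c *\<^sub>R w) = c *\<^sub>R perp a w"
proof -
  have "((a + c *\<^sub>R w) \<bullet> a) / (norm a)\<^sup>2 = 1 + c * ((w \<bullet> a) / (norm a)\<^sup>2)"
    using assms by (simp add: inner_add_left power2_norm_eq_inner field_simps)
  then show ?thesis
    by (simp add: perp_def algebra_simps)
qed

lemma ball_max_scaleR: "0 \<le> c \<Longrightarrow> ball_max x (c *\<^sub>R b) = c * ball_max x b"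
  by (simp add: ball_max_def algebra_simps)

text \<open>On the hyperplane \<open>a \<bullet> z = 0\<close> only the components orthogonal to \<open>a\<close> matter, so the
  ball bound holds with \<open>x\<close> and \<open>b\<close> replaced by their projections \<dots>\<close>
lemma hyperplane_ball_bound:
  fixes x z a b :: "'a::real_inner"
  assumes "z \<bullet> a = 0" and "norm z ^ 2 \<le> z \<bullet> b"
  shows "x \<bullet> z \<le> ball_max (perp a x) (perp a b)"
proof -
  have "norm z ^ 2 \<le> z \<bullet> perp a b"
    using assms by (simp add: inner_perp)
  then have "perp a x \<bullet> z \<le> ball_max (perp a x) (perp a b)"
    by (rule ball_max_upper)
  then show ?thesis
    using inner_perp[OF assms(1), of x] by (simp add: inner_commute)
qed

lemma hyperplane_ball_argmax:
  fixes x a b :: "'a::real_inner"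
  defines "z \<equiv> ball_argmax (perp a x) (perp a b)"
  shows "z \<bullet> a = 0" and "norm z ^ 2 \<le> z \<bullet> b" and "x \<bullet> z = ball_max (perp a x) (perp a b)"
proof -
  show za: "z \<bullet> a = 0"
    by (simp add: z_def ball_argmax_def inner_add_left perp_orthogonal)
  show "norm z ^ 2 \<le> z \<bullet> b"
    using ball_argmax(1)[of "perp a x" "perp a b"] by (simp add: z_def[symmetric] inner_perp[OF za])
  show "x \<bullet> z = ball_max (perp a x) (perp a b)"
    using ball_argmax(2)[of "perp a x" "perp a b"] inner_perp[OF za, of x]
    by (simp add: z_def[symmetric] inner_commute)
qed

definition lens :: "'a::real_inner \<Rightarrow> 'a \<Rightarrow> 'a set" where
  "lens a b = {v. norm v ^ 2 \<le> v \<bullet> b \<and> a \<bullet> v \<le> 0}"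

definition is_max_value :: "('a \<Rightarrow> real) \<Rightarrow> 'a set \<Rightarrow> real \<Rightarrow> bool" where
  "is_max_value f S M \<longleftrightarrow> (\<exists>v\<in>S. f v = M) \<and> (\<forall>v\<in>S. f v \<le> M)"

lemma is_max_value_Sup: "is_max_value f S M \<Longrightarrow> Sup (f ` S) = M"
  unfolding is_max_value_def by (intro cSup_eq_maximum) auto

lemma is_max_value_translate:
  fixes x t :: "'a::real_inner"
  assumes "is_max_value (\<lambda>v. x \<bullet> v) S M"
  shows "is_max_value (\<lambda>\<theta>. x \<bullet> \<theta>) ((+) t ` S) (x \<bullet> t + M)"
  using assms by (auto simp: is_max_value_def inner_add_right)

lemma segment_meets_hyperplane:
  fixes a v p :: "'a::real_inner"
  assumes "a \<bullet> v \<le> 0" and "a \<bullet> p > 0"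
  obtains t where "0 \<le> t" "t \<le> 1" "a \<bullet> ((1 - t) *\<^sub>R v + t *\<^sub>R p) = 0"
proof
  define t where "t = (a \<bullet> v) / (a \<bullet> v - a \<bullet> p)"
  show "0 \<le> t" "t \<le> 1"
    using assms by (auto simp: t_def divide_simps)
  have "a \<bullet> ((1 - t) *\<^sub>R v + t *\<^sub>R p) = (1 - t) * (a \<bullet> v) + t * (a \<bullet> p)"
    by (simp add: inner_add_right)
  also have "\<dots> = 0"
    using assms by (simp add: t_def field_simps)
  finally show "a \<bullet> ((1 - t) *\<^sub>R v + t *\<^sub>R p) = 0" .
qed

lemma lens_max_ball:
  fixes x a b :: "'a::real_inner"
  assumes "x \<noteq> 0" and "(a \<bullet> b) * norm x + norm b * (a \<bullet> x) \<le> 0"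
  shows "is_max_value (\<lambda>v. x \<bullet> v) (lens a b) (ball_max x b)"
proof -
  have "2 * norm x * (a \<bullet> ball_argmax x b) \<le> 0"
    using assms by (simp add: ball_argmax_side)
  then have "a \<bullet> ball_argmax x b \<le> 0"
    using assms(1) by (simp add: mult_le_0_iff)
  then have "ball_argmax x b \<in> lens a b"
    by (simp add: lens_def ball_argmax(1))
  then show ?thesis
    by (auto simp: is_max_value_def lens_def ball_argmax(2) ball_max_upper)
qed

text \<open>Otherwise the maximum over the lens is attained on the hyperplane \<open>a \<bullet> v = 0\<close>: moving a lens
  point towards the ball maximiser until it hits the hyperplane does not decrease \<open>x \<bullet> v\<close>.\<close>
lemma lens_max_cap:
  fixes x a b :: "'a::real_inner"
  assumes cap: "(a \<bullet> b) * norm x + norm b * (a \<bullet> x) > 0"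
  shows "is_max_value (\<lambda>v. x \<bullet> v) (lens a b) (ball_max (perp a x) (perp a b))"
proof -
  have "ball_argmax (perp a x) (perp a b) \<in> lens a b"
    using hyperplane_ball_argmax(1,2)[where x=x and a=a and b=b] by (simp add: lens_def inner_commute)
  moreover have "x \<bullet> v \<le> ball_max (perp a x) (perp a b)" if v: "v \<in> lens a b" for v
  proof -
    define p where "p = ball_argmax x b"
    have "x \<noteq> 0"
      using cap by auto
    then have "0 < 2 * norm x * (a \<bullet> p)"
      using cap by (simp add: p_def ball_argmax_side)
    then have "a \<bullet> p > 0"
      by (simp add: zero_less_mult_iff)
    moreover have "a \<bullet> v \<le> 0"
      using v by (simp add: lens_def)
    ultimately obtain t where t: "0 \<le> t" "t \<le> 1" and z: "a \<bullet> ((1 - t) *\<^sub>R v + t *\<^sub>R p) = 0"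
      using segment_meets_hyperplane by blast
    define z where "z = (1 - t) *\<^sub>R v + t *\<^sub>R p"
    have "v \<in> cball (b /\<^sub>R 2) (norm b / 2)" "p \<in> cball (b /\<^sub>R 2) (norm b / 2)"
      using v ball_argmax(1)[of x b] unfolding lens_def p_def diameter_ball_eq_cball[symmetric] by auto
    then have "z \<in> cball (b /\<^sub>R 2) (norm b / 2)"
      unfolding z_def using t by (intro convexD[OF convex_cball]) auto
    then have "norm z ^ 2 \<le> z \<bullet> b"
      by (simp only: diameter_ball_eq_cball)
    moreover have "z \<bullet> a = 0"
      using z by (simp add: z_def inner_commute)
    ultimately have "x \<bullet> z \<le> ball_max (perp a x) (perp a b)"
      by (intro hyperplane_ball_bound)
    moreover have "x \<bullet> v \<le> x \<bullet> p"
      using v by (simp add: lens_def p_def ball_argmax(2) ball_max_upper)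
    then have "x \<bullet> v \<le> x \<bullet> z"
      using t by (simp add: z_def inner_add_right algebra_simps mult_left_mono)
    ultimately show ?thesis by linarith
  qed
  ultimately show ?thesis
    using hyperplane_ball_argmax(3)[where x=x and a=a and b=b] unfolding is_max_value_def by blast
qed

text \<open>The dual feasible set \<open>F\<close> is convex and closed, so the dual optimum is a genuine projection.\<close>
lemma dual_feasible_convex:
  fixes X :: "real^'p^'n"
  shows "convex (dual_feasible X)"
proof (rule convexI)
  fix \<theta> \<eta> and u v :: real
  assume "\<theta> \<in> dual_feasible X" "\<eta> \<in> dual_feasible X" "0 \<le> u" "0 \<le> v" "u + v = 1"
  then have h: "infnorm (transpose X *v \<theta>) \<le> 1" "infnorm (transpose X *v \<eta>) \<le> 1" "0 \<le> u" "0 \<le> v" "u + v = 1"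
    by (auto simp: dual_feasible_def)
  have "infnorm (transpose X *v (u *\<^sub>R \<theta> + v *\<^sub>R \<eta>))
        \<le> u * infnorm (transpose X *v \<theta>) + v * infnorm (transpose X *v \<eta>)"
    using infnorm_triangle[of "u *\<^sub>R (transpose X *v \<theta>)" "v *\<^sub>R (transpose X *v \<eta>)"] h(3,4)
    by (simp add: matrix_vector_right_distrib matrix_vector_mult_scaleR infnorm_mul)
  also have "\<dots> \<le> u + v"
    using h by (intro add_mono mult_left_le) auto
  finally show "u *\<^sub>R \<theta> + v *\<^sub>R \<eta> \<in> dual_feasible X"
    using h(5) by (simp add: dual_feasible_def)
qed

lemma dual_feasible_closed: "closed (dual_feasible X)"
proof -
  have "continuous_on UNIV (\<lambda>\<theta>. infnorm (transpose X *v \<theta>))"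
    by (intro continuous_at_imp_continuous_on ballI continuous_infnorm linear_continuous_at
        matrix_vector_mul_bounded_linear)
  from closed_Collect_le[OF this continuous_on_const] show ?thesis
    by (simp add: dual_feasible_def)
qed

text \<open>Variational inequality of the projection onto \<open>F\<close>, tested at \<open>0 \<in> F\<close>.\<close>
lemma dual_opt_residual: "0 \<le> ((1/l) *\<^sub>R y - dual_opt X y l) \<bullet> dual_opt X y l"
proof -
  have "0 \<in> dual_feasible X"
    by (simp add: dual_feasible_def infnorm_0)
  from closest_point_dot[OF dual_feasible_convex dual_feasible_closed this, of "(1/l) *\<^sub>R y"]
  show ?thesis
    by (simp add: dual_opt_def inner_diff_right)
qed

lemma Omega_eq_lens:
  fixes X :: "real^'p^'n" and y :: "real^'n" and l1 l2 :: real
  defines "\<theta>1 \<equiv> dual_opt X y l1"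
  shows "Omega X y l1 l2 = (+) \<theta>1 ` lens ((1/l1) *\<^sub>R y - \<theta>1) ((1/l2) *\<^sub>R y - \<theta>1)"
proof -
  have "\<theta> \<in> Omega X y l1 l2 \<longleftrightarrow> \<theta> - \<theta>1 \<in> lens ((1/l1) *\<^sub>R y - \<theta>1) ((1/l2) *\<^sub>R y - \<theta>1)" for \<theta>
    unfolding Omega_def lens_def \<theta>1_def[symmetric] power2_norm_eq_inner
    by (simp add: inner_diff_left inner_diff_right inner_commute) argo
  then show ?thesis
    by (auto simp: image_iff) (metis add.commute diff_add_cancel)
qed

lemma Omega_Sup:
  fixes X :: "real^'p^'n" and x y :: "real^'n" and l1 l2 :: real
  defines "\<theta>1 \<equiv> dual_opt X y l1"
  assumes "is_max_value (\<lambda>v. x \<bullet> v) (lens ((1/l1) *\<^sub>R y - \<theta>1) ((1/l2) *\<^sub>R y - \<theta>1)) M"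
  shows "Sup ((\<lambda>\<theta>. x \<bullet> \<theta>) ` Omega X y l1 l2) = x \<bullet> \<theta>1 + M"
  unfolding Omega_eq_lens \<theta>1_def[symmetric]
  by (rule is_max_value_Sup is_max_value_translate assms)+

lemma residual_gap_inner_pos:
  fixes X :: "real^'p^'n" and y :: "real^'n" and l1 l2 :: real
  assumes "l1 > l2" and "l2 > 0"
  defines "a \<equiv> (1/l1) *\<^sub>R y - dual_opt X y l1"
  defines "b \<equiv> (1/l2) *\<^sub>R y - dual_opt X y l1"
  assumes "a \<noteq> 0"
  shows "a \<bullet> b > 0"
proof -
  have "(1/l1) * (a \<bullet> y) = a \<bullet> a + a \<bullet> dual_opt X y l1"
    by (simp add: a_def inner_diff_left inner_diff_right inner_commute diff_divide_distrib)
  moreover have "a \<bullet> a > 0" "0 \<le> a \<bullet> dual_opt X y l1"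
    using assms(5) dual_opt_residual[of l1 y X] by (simp_all add: a_def)
  ultimately have "0 < (1/l1) * (a \<bullet> y)"
    by linarith
  then have "a \<bullet> y > 0"
    using assms(1,2) by (simp add: zero_less_divide_iff)
  moreover have "b = a + (1/l2 - 1/l1) *\<^sub>R y"
    by (simp add: a_def b_def algebra_simps)
  moreover have "1/l2 - 1/l1 > 0"
    using assms(1,2) by (simp add: frac_less2)
  ultimately show ?thesis
    using \<open>a \<bullet> a > 0\<close> by (simp add: inner_add_right add_pos_pos)
qed

text \<open>The cosine hypotheses of the theorem decide the signs of \<open>(a \<bullet> b) |x| \<plusminus> |b| (a \<bullet> x)\<close>.\<close>
lemma cosine_comparisons:
  fixes ba xa na nb nx :: real
  assumes "na > 0" "nb > 0" "nx > 0" "ba > 0"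
  shows "ba / (nb * na) > \<bar>xa\<bar> / (nx * na) \<Longrightarrow> ba * nx + nb * xa > 0 \<and> ba * nx - nb * xa > 0"
    and "xa > 0 \<Longrightarrow> ba / (nb * na) \<le> xa / (nx * na) \<Longrightarrow> ba * nx + nb * xa > 0 \<and> ba * nx - nb * xa \<le> 0"
    and "xa < 0 \<Longrightarrow> ba / (nb * na) \<le> - xa / (nx * na) \<Longrightarrow> ba * nx + nb * xa \<le> 0 \<and> ba * nx - nb * xa > 0"
proof -
  have le: "ba / (nb * na) \<le> w / (nx * na) \<longleftrightarrow> ba * nx \<le> nb * w"
    and less: "w / (nx * na) < ba / (nb * na) \<longleftrightarrow> nb * w < ba * nx" for w
    using assms by (simp_all add: divide_simps mult.commute mult.left_commute)
  have "nb * xa \<le> nb * \<bar>xa\<bar>" "nb * - xa \<le> nb * \<bar>xa\<bar>"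
    using assms(2) by (intro mult_left_mono; simp)+
  then show "ba / (nb * na) > \<bar>xa\<bar> / (nx * na) \<Longrightarrow> ba * nx + nb * xa > 0 \<and> ba * nx - nb * xa > 0"
    unfolding less by linarith
  have "ba * nx > 0" "xa > 0 \<Longrightarrow> nb * xa > 0" "xa < 0 \<Longrightarrow> nb * xa < 0"
    using assms by (simp_all add: mult_pos_neg)
  then show "xa > 0 \<Longrightarrow> ba / (nb * na) \<le> xa / (nx * na) \<Longrightarrow> ba * nx + nb * xa > 0 \<and> ba * nx - nb * xa \<le> 0"
    and "xa < 0 \<Longrightarrow> ba / (nb * na) \<le> - xa / (nx * na) \<Longrightarrow> ba * nx + nb * xa \<le> 0 \<and> ba * nx - nb * xa > 0"
    unfolding le by linarith+
qed

text \<open>The two dual bounds in closed form, according to where the ball maximiser of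
  \<open>\<plusminus>x\<^sub>j\<close> lies relative to the hyperplane \<open>a \<bullet> v = 0\<close>.\<close>
lemma u_plus_u_minus_closed_forms:
  fixes X :: "real^'p^'n" and y :: "real^'n" and l1 l2 :: real and j :: 'p
  assumes "l1 > l2" and "l2 > 0" and xj0: "column j X \<noteq> 0"
  defines "\<theta>1 \<equiv> dual_opt X y l1"
  defines "xj \<equiv> column j X"
  defines "a \<equiv> (1/l1) *\<^sub>R y - \<theta>1"
  defines "b \<equiv> (1/l2) *\<^sub>R y - \<theta>1"
  shows "(a \<bullet> b) * norm xj + norm b * (a \<bullet> xj) > 0 \<Longrightarrow> u_plus X y l1 l2 j
           = xj \<bullet> \<theta>1 + ((1/l2 - 1/l1) / 2) * (norm (perp a xj) * norm (perp a y) + perp a xj \<bullet> perp a y)"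
    and "(a \<bullet> b) * norm xj - norm b * (a \<bullet> xj) > 0 \<Longrightarrow> u_minus X y l1 l2 j
           = - (xj \<bullet> \<theta>1) + ((1/l2 - 1/l1) / 2) * (norm (perp a xj) * norm (perp a y) - perp a xj \<bullet> perp a y)"
    and "(a \<bullet> b) * norm xj + norm b * (a \<bullet> xj) \<le> 0 \<Longrightarrow> u_plus X y l1 l2 j
           = xj \<bullet> \<theta>1 + (1/2) * (norm xj * norm b + xj \<bullet> b)"
    and "(a \<bullet> b) * norm xj - norm b * (a \<bullet> xj) \<le> 0 \<Longrightarrow> u_minus X y l1 l2 j
           = - (xj \<bullet> \<theta>1) + (1/2) * (norm xj * norm b - xj \<bullet> b)"
proof -
  define c where "c = 1/l2 - 1/l1"
  have "c > 0"
    using assms(1,2) by (simp add: c_def frac_less2)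
  have perp_b: "perp a b = c *\<^sub>R perp a y" if "a \<noteq> 0"
    using perp_shift[OF that, of c y] by (simp add: a_def b_def c_def algebra_simps)
  have u_plus: "u_plus X y l1 l2 j = xj \<bullet> \<theta>1 + M" if "is_max_value (\<lambda>v. xj \<bullet> v) (lens a b) M" for M
    using Omega_Sup[of xj l1 y X l2 M, folded \<theta>1_def, folded a_def b_def] that
    by (simp add: u_plus_def xj_def)
  have u_minus: "u_minus X y l1 l2 j = - (xj \<bullet> \<theta>1) + M" if "is_max_value (\<lambda>v. - xj \<bullet> v) (lens a b) M" for M
    using Omega_Sup[of "- xj" l1 y X l2 M, folded \<theta>1_def, folded a_def b_def] that
    by (simp add: u_minus_def xj_def)
  have "xj \<noteq> 0" "- xj \<noteq> 0"
    using xj0 by (simp_all add: xj_def)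
  show "u_plus X y l1 l2 j
          = xj \<bullet> \<theta>1 + (c / 2) * (norm (perp a xj) * norm (perp a y) + perp a xj \<bullet> perp a y)"
    if cap: "(a \<bullet> b) * norm xj + norm b * (a \<bullet> xj) > 0"
  proof -
    have "a \<noteq> 0"
      using cap by auto
    then show ?thesis
      using u_plus[OF lens_max_cap[OF cap]] \<open>c > 0\<close>
      by (simp add: perp_b ball_max_scaleR ball_max_def algebra_simps)
  qed
  show "u_minus X y l1 l2 j
          = - (xj \<bullet> \<theta>1) + (c / 2) * (norm (perp a xj) * norm (perp a y) - perp a xj \<bullet> perp a y)"
    if cap: "(a \<bullet> b) * norm xj - norm b * (a \<bullet> xj) > 0"
  proof -
    have "a \<noteq> 0"
      using cap by auto
    moreover have "(a \<bullet> b) * norm (- xj) + norm b * (a \<bullet> - xj) > 0"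
      using cap by simp
    ultimately show ?thesis
      using u_minus[OF lens_max_cap] \<open>c > 0\<close>
      by (simp add: perp_uminus perp_b ball_max_scaleR ball_max_def algebra_simps)
  qed
  show "u_plus X y l1 l2 j = xj \<bullet> \<theta>1 + (1/2) * (norm xj * norm b + xj \<bullet> b)"
    if "(a \<bullet> b) * norm xj + norm b * (a \<bullet> xj) \<le> 0"
    using u_plus[OF lens_max_ball[OF \<open>xj \<noteq> 0\<close> that]] by (simp add: ball_max_def)
  show "u_minus X y l1 l2 j = - (xj \<bullet> \<theta>1) + (1/2) * (norm xj * norm b - xj \<bullet> b)"
    if "(a \<bullet> b) * norm xj - norm b * (a \<bullet> xj) \<le> 0"
  proof -
    have "(a \<bullet> b) * norm (- xj) + norm b * (a \<bullet> - xj) \<le> 0"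
      using that by simp
    then show ?thesis
      using u_minus[OF lens_max_ball[OF \<open>- xj \<noteq> 0\<close>]] by (simp add: ball_max_def)
  qed
qed

theorem theorem3:
  fixes X :: "real^'p^'n" and y :: "real^'n" and l1 l2 :: real and j :: 'p
  assumes "y \<noteq> 0"
    and "infnorm (transpose X *v y) \<ge> l1" and "l1 > l2" and "l2 > 0"
    and "column j X \<noteq> 0"
  defines "\<theta>1 \<equiv> dual_opt X y l1"
  defines "xj \<equiv> column j X"
  defines "a \<equiv> (1/l1) *\<^sub>R y - \<theta>1"
  defines "b \<equiv> (1/l2) *\<^sub>R y - \<theta>1"
  defines "xp \<equiv> xj - ((xj \<bullet> a) / (norm a)\<^sup>2) *\<^sub>R a"
  defines "yp \<equiv> y - ((y \<bullet> a) / (norm a)\<^sup>2) *\<^sub>R a"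
  defines "P1 \<equiv> u_plus X y l1 l2 j = xj \<bullet> \<theta>1 + ((1/l2 - 1/l1) / 2) * (norm xp * norm yp + xp \<bullet> yp)"
  defines "N1 \<equiv> u_minus X y l1 l2 j = - (xj \<bullet> \<theta>1) + ((1/l2 - 1/l1) / 2) * (norm xp * norm yp - xp \<bullet> yp)"
  defines "N2 \<equiv> u_minus X y l1 l2 j = - (xj \<bullet> \<theta>1) + (1/2) * (norm xj * norm b - xj \<bullet> b)"
  defines "P2 \<equiv> u_plus X y l1 l2 j = xj \<bullet> \<theta>1 + (1/2) * (norm xj * norm b + xj \<bullet> b)"
  shows "(a \<noteq> 0 \<and> (b \<bullet> a) / (norm b * norm a) > \<bar>xj \<bullet> a\<bar> / (norm xj * norm a) \<longrightarrow> P1 \<and> N1)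
       \<and> (xj \<bullet> a > 0 \<and> (b \<bullet> a) / (norm b * norm a) \<le> (xj \<bullet> a) / (norm xj * norm a) \<longrightarrow> P1 \<and> N2)
       \<and> (xj \<bullet> a < 0 \<and> (b \<bullet> a) / (norm b * norm a) \<le> - (xj \<bullet> a) / (norm xj * norm a) \<longrightarrow> P2 \<and> N1)
       \<and> (a = 0 \<longrightarrow> N2 \<and> P2)"
proof -
  let ?dp = "(a \<bullet> b) * norm xj + norm b * (a \<bullet> xj)"
  let ?dm = "(a \<bullet> b) * norm xj - norm b * (a \<bullet> xj)"
  have "xp = perp a xj" and "yp = perp a y"
    by (simp_all add: xp_def yp_def perp_def)
  note closed = u_plus_u_minus_closed_forms[OF assms(3-5), where y=y,
      folded \<theta>1_def xj_def, folded a_def b_def, folded this]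
  have P1: "?dp > 0 \<Longrightarrow> P1" and N1: "?dm > 0 \<Longrightarrow> N1"
    and P2: "?dp \<le> 0 \<Longrightarrow> P2" and N2: "?dm \<le> 0 \<Longrightarrow> N2"
    unfolding P1_def N1_def P2_def N2_def by (fact closed)+
  have acute: "a \<bullet> b > 0" "norm a > 0" "norm b > 0" if "a \<noteq> 0"
    using residual_gap_inner_pos[OF assms(3,4), where y=y and X=X, folded \<theta>1_def, folded a_def b_def] that
    by auto
  have "norm xj > 0"
    using assms(5) by (simp add: xj_def)
  note cos = cosine_comparisons[OF _ _ this, where na="norm a" and nb="norm b" and ba="a \<bullet> b" and xa="a \<bullet> xj"]
  have comm: "b \<bullet> a = a \<bullet> b" "xj \<bullet> a = a \<bullet> xj"
    by (simp_all add: inner_commute)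
  show ?thesis
    unfolding comm
  proof (intro conjI[of "_ \<longrightarrow> _"] impI)
    assume "a \<noteq> 0 \<and> (a \<bullet> b) / (norm b * norm a) > \<bar>a \<bullet> xj\<bar> / (norm xj * norm a)"
    then show "P1 \<and> N1"
      using cos(1) acute P1 N1 by auto
  next
    assume "a \<bullet> xj > 0 \<and> (a \<bullet> b) / (norm b * norm a) \<le> (a \<bullet> xj) / (norm xj * norm a)"
    then show "P1 \<and> N2"
      using cos(2) acute P1 N2 by force
  next
    assume "a \<bullet> xj < 0 \<and> (a \<bullet> b) / (norm b * norm a) \<le> - (a \<bullet> xj) / (norm xj * norm a)"
    then show "P2 \<and> N1"
      using cos(3) acute P2 N1 by force
  next
    assume "a = 0"
    then show "N2 \<and> P2"
      using P2 N2 by simp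
  qed
qed

end
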